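(* Let $N,d\ge1$, $\lambda,\tau>0$, and let $\psi:[0,\infty)\to(0,\infty)$ be positive, nonincreasing, differentiable with $\psi(r)\le1$ for all $r\ge0$. Let $(x_i,v_i)_{i=1}^N$ solve $$\dot x_i(t)=v_i(t),\qquad \dot v_i(t)=\frac{\lambda}{N}\sum_{j=1}^N\psi(|x_i(t-\tau)-x_j(t-\tau)|)\,(v_j(t-\tau)-v_i(t-\tau)),\qquad t>0,$$ with initial data $(x_i,v_i)=(x_i^0,v_i^0)$ on $[-\tau,0]$, $(x_i^0,v_i^0)\in C([-\tau,0];\mathbb{R}^{2d})\cap C^1((-\tau,0);\mathbb{R}^{2d})$. Then $$\frac{d}{dt}V(t)\le 2\lambda\big(V(t)+V(t-\tau)\big)\qquad\text{for all }t>0.$$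
   Context: $V(t):=\frac12\sum_{i,j=1}^N|v_i(t)-v_j(t)|^2$ for $t\ge-\tau$. *)

theory Defs
  imports "HOL-Analysis.Analysis"
begin

definition Vfun :: "nat \<Rightarrow> (nat \<Rightarrow> real \<Rightarrow> real ^ 'd) \<Rightarrow> real \<Rightarrow> real" where
  "Vfun N v t = (1/2) * (\<Sum>i<N. \<Sum>j<N. (norm (v i t - v j t))\<^sup>2)"

end

theory Submission
  imports Defs
begin

text \<open>Differentiating V at t > 0 with the equation for \<open>v\<close> gives
  \<open>V'(t) = \<Sum>\<^sub>i\<^sub>j \<langle>v\<^sub>i(t) - v\<^sub>j(t), a\<^sub>i - a\<^sub>j\<rangle> = 2 \<Sum>\<^sub>i\<^sub>j \<langle>v\<^sub>i(t) - v\<^sub>j(t), a\<^sub>i\<rangle>\<close>,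
  where \<open>a\<^sub>i\<close> is the delayed acceleration. Young's inequality splits each term into
  \<open>\<lambda>|v\<^sub>i(t) - v\<^sub>j(t)|\<^sup>2 + |a\<^sub>i|\<^sup>2/\<lambda>\<close>, and since \<open>0 < \<psi> \<le> 1\<close>, the triangle inequality and
  the QM-AM inequality bound \<open>N |a\<^sub>i|\<^sup>2\<close> by \<open>\<lambda>\<^sup>2 \<Sum>\<^sub>k |v\<^sub>k(t-\<tau>) - v\<^sub>i(t-\<tau>)|\<^sup>2\<close>.
  The estimate is pointwise in t and uses only \<open>\<lambda> > 0\<close>, \<open>0 < \<psi> \<le> 1\<close> and the equation
  for \<open>v\<close>.\<close>

lemma has_real_derivative_norm_squared:
  fixes f :: "real \<Rightarrow> 'a::real_inner"
  assumes "(f has_vector_derivative f') (at t)"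
  shows "((\<lambda>s. (norm (f s))\<^sup>2) has_real_derivative 2 * inner (f t) f') (at t)"
proof -
  have "((\<lambda>s. (norm (f s))\<^sup>2) has_derivative (\<lambda>h. 2 *\<^sub>R inner (f t) (h *\<^sub>R f'))) (at t)"
    using has_derivative_compose[OF assms[unfolded has_vector_derivative_def] has_derivative_sqnorm_at]
    by simp
  then show ?thesis
    unfolding has_field_derivative_def by (rule has_derivative_eq_rhs) (auto simp: mult_ac)
qed

lemma two_inner_le_weighted_squares:
  fixes u a :: "'a::real_inner"
  assumes "lam > 0"
  shows "2 * inner u a \<le> lam * (norm u)\<^sup>2 + (norm a)\<^sup>2 / lam"
proof -
  have "0 \<le> (norm (lam *\<^sub>R u - a))\<^sup>2 / lam" using assms by simp
  also have "\<dots> = lam * (norm u)\<^sup>2 - 2 * inner u a + (norm a)\<^sup>2 / lam"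
    using assms unfolding power2_norm_eq_inner
    by (simp add: inner_diff_left inner_diff_right inner_commute power2_eq_square field_simps)
  finally show ?thesis by simp
qed

lemma norm_sum_scaleR_squared_le:
  fixes z :: "'i \<Rightarrow> 'a::real_normed_vector"
  assumes "\<And>k. k \<in> A \<Longrightarrow> \<bar>c k\<bar> \<le> 1"
  shows "(norm (\<Sum>k\<in>A. c k *\<^sub>R z k))\<^sup>2 \<le> real (card A) * (\<Sum>k\<in>A. (norm (z k))\<^sup>2)"
proof -
  have "norm (\<Sum>k\<in>A. c k *\<^sub>R z k) \<le> (\<Sum>k\<in>A. norm (c k *\<^sub>R z k))"
    by (rule norm_sum)
  also have "\<dots> \<le> (\<Sum>k\<in>A. norm (z k))"
    by (rule sum_mono) (use assms in \<open>auto intro: mult_left_le_one_le\<close>)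
  finally have "(norm (\<Sum>k\<in>A. c k *\<^sub>R z k))\<^sup>2 \<le> (\<Sum>k\<in>A. norm (z k))\<^sup>2"
    by (simp add: power_mono)
  also have "\<dots> \<le> (\<Sum>k\<in>A. (norm (z k))\<^sup>2) * real (card A)"
    by (rule sum_squared_le_sum_of_squares)
  finally show ?thesis by (simp add: mult.commute)
qed

lemma norm_scaled_mean_squared_le:
  fixes z :: "'i \<Rightarrow> 'a::real_normed_vector"
  assumes "\<And>k. k \<in> A \<Longrightarrow> \<bar>c k\<bar> \<le> 1"
  shows "real (card A) * (norm ((lam / real (card A)) *\<^sub>R (\<Sum>k\<in>A. c k *\<^sub>R z k)))\<^sup>2
    \<le> lam\<^sup>2 * (\<Sum>k\<in>A. (norm (z k))\<^sup>2)"
proof (cases "card A = 0")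
  case False
  have "real (card A) * (norm ((lam / real (card A)) *\<^sub>R (\<Sum>k\<in>A. c k *\<^sub>R z k)))\<^sup>2
      = lam\<^sup>2 / real (card A) * (norm (\<Sum>k\<in>A. c k *\<^sub>R z k))\<^sup>2"
    using False by (simp add: power_mult_distrib power_divide power2_eq_square)
  also have "\<dots> \<le> lam\<^sup>2 / real (card A) * (real (card A) * (\<Sum>k\<in>A. (norm (z k))\<^sup>2))"
    by (intro mult_left_mono norm_sum_scaleR_squared_le assms) auto
  finally show ?thesis
    using False by simp
qed (simp add: sum_nonneg)

lemma sum_inner_diff_diff:
  fixes u a :: "'i \<Rightarrow> 'a::real_inner"
  shows "(\<Sum>i\<in>A. \<Sum>j\<in>A. inner (u i - u j) (a i - a j)) = 2 * (\<Sum>i\<in>A. \<Sum>j\<in>A. inner (u i - u j) (a i))"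
proof -
  have "(\<Sum>i\<in>A. \<Sum>j\<in>A. inner (u i - u j) (a j)) = (\<Sum>j\<in>A. \<Sum>i\<in>A. inner (u i - u j) (a j))"
    by (rule sum.swap)
  also have "\<dots> = (\<Sum>i\<in>A. \<Sum>j\<in>A. - inner (u i - u j) (a i))"
    by (simp add: inner_diff_left)
  also have "\<dots> = - (\<Sum>i\<in>A. \<Sum>j\<in>A. inner (u i - u j) (a i))"
    by (simp add: sum_negf)
  finally show ?thesis
    by (simp add: inner_diff_right sum_subtractf)
qed

lemma sum_inner_diff_le_sum_norm_diff_squared:
  fixes u a w :: "'i \<Rightarrow> 'a::real_inner"
  assumes lam: "lam > 0"
    and a_bound: "\<And>i. i \<in> A \<Longrightarrow>
      real (card A) * (norm (a i))\<^sup>2 \<le> lam\<^sup>2 * (\<Sum>k\<in>A. (norm (w k - w i))\<^sup>2)"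
  shows "(\<Sum>i\<in>A. \<Sum>j\<in>A. inner (u i - u j) (a i - a j))
    \<le> lam * ((\<Sum>i\<in>A. \<Sum>j\<in>A. (norm (u i - u j))\<^sup>2) + (\<Sum>i\<in>A. \<Sum>j\<in>A. (norm (w i - w j))\<^sup>2))"
proof -
  have "(\<Sum>i\<in>A. \<Sum>j\<in>A. inner (u i - u j) (a i - a j)) = (\<Sum>i\<in>A. \<Sum>j\<in>A. 2 * inner (u i - u j) (a i))"
    by (simp add: sum_inner_diff_diff sum_distrib_left)
  also have "\<dots> \<le> (\<Sum>i\<in>A. \<Sum>j\<in>A. lam * (norm (u i - u j))\<^sup>2 + (norm (a i))\<^sup>2 / lam)"
    by (intro sum_mono two_inner_le_weighted_squares lam)
  also have "\<dots> = lam * (\<Sum>i\<in>A. \<Sum>j\<in>A. (norm (u i - u j))\<^sup>2) + (\<Sum>i\<in>A. real (card A) * (norm (a i))\<^sup>2 / lam)"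
    by (simp add: sum.distrib sum_distrib_left)
  also have "\<dots> \<le> lam * (\<Sum>i\<in>A. \<Sum>j\<in>A. (norm (u i - u j))\<^sup>2) + (\<Sum>i\<in>A. lam * (\<Sum>j\<in>A. (norm (w i - w j))\<^sup>2))"
  proof (intro add_left_mono sum_mono)
    fix i assume "i \<in> A"
    have "(\<Sum>k\<in>A. (norm (w k - w i))\<^sup>2) = (\<Sum>j\<in>A. (norm (w i - w j))\<^sup>2)"
      by (metis norm_minus_commute)
    with a_bound[OF \<open>i \<in> A\<close>]
    have "real (card A) * (norm (a i))\<^sup>2 \<le> lam * (lam * (\<Sum>j\<in>A. (norm (w i - w j))\<^sup>2))"
      by (simp add: power2_eq_square mult.assoc)
    then show "real (card A) * (norm (a i))\<^sup>2 / lam \<le> lam * (\<Sum>j\<in>A. (norm (w i - w j))\<^sup>2)"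
      using lam by (simp add: pos_divide_le_eq mult.commute)
  qed
  finally show ?thesis
    by (simp add: distrib_left sum_distrib_left)
qed

lemma Vfun_has_real_derivative:
  assumes "\<And>i. i < N \<Longrightarrow> (v i has_vector_derivative a i) (at t)"
  shows "(Vfun N v has_real_derivative (\<Sum>i<N. \<Sum>j<N. inner (v i t - v j t) (a i - a j))) (at t)"
proof -
  have "(Vfun N v has_real_derivative
      (1/2) * (\<Sum>i<N. \<Sum>j<N. 2 * inner (v i t - v j t) (a i - a j))) (at t)"
    unfolding Vfun_def
    by (intro DERIV_cmult DERIV_sum has_real_derivative_norm_squared
        has_vector_derivative_diff assms) auto
  then show ?thesis
    by (simp add: sum_distrib_left[symmetric])
qed

theorem lemma3p3:
  fixes N :: nat and lam \<tau> :: real and \<psi> :: "real \<Rightarrow> real"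
    and x v :: "nat \<Rightarrow> real \<Rightarrow> real ^ 'd"
  assumes N: "N \<ge> 1"
    and lam_pos: "lam > 0" and tau: "\<tau> > 0"
    and psi_pos: "\<forall>r\<ge>0. \<psi> r > 0"
    and psi_le1: "\<forall>r\<ge>0. \<psi> r \<le> 1"
    and psi_mono: "\<forall>r s. 0 \<le> r \<and> r \<le> s \<longrightarrow> \<psi> s \<le> \<psi> r"
    and psi_diff: "\<forall>r\<ge>0. \<psi> differentiable (at r within {0..})"
    and cont_x: "\<forall>i<N. continuous_on {-\<tau>..} (x i)"
    and cont_v: "\<forall>i<N. continuous_on {-\<tau>..} (v i)"
    and init_C1: "\<forall>i<N. \<exists>x' v'. continuous_on {-\<tau><..<0} x' \<and> continuous_on {-\<tau><..<0} v' \<and>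
        (\<forall>t\<in>{-\<tau><..<0}. (x i has_vector_derivative x' t) (at t) \<and>
                             (v i has_vector_derivative v' t) (at t))"
    and ode_x: "\<forall>i<N. \<forall>t>0. (x i has_vector_derivative v i t) (at t)"
    and ode_v: "\<forall>i<N. \<forall>t>0. (v i has_vector_derivative
        ((lam / real N) *\<^sub>R (\<Sum>j<N. \<psi> (norm (x i (t - \<tau>) - x j (t - \<tau>))) *\<^sub>R
                                   (v j (t - \<tau>) - v i (t - \<tau>))))) (at t)"
  shows "\<forall>t>0. \<exists>D. (Vfun N v has_real_derivative D) (at t) \<and>
                   D \<le> 2 * lam * (Vfun N v t + Vfun N v (t - \<tau>))"
proof (intro allI impI)
  fix t :: real assume "t > 0"
  define w where "w i = v i (t - \<tau>)" for i
  define a where "a i = (lam / real N) *\<^sub>R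
    (\<Sum>j<N. \<psi> (norm (x i (t - \<tau>) - x j (t - \<tau>))) *\<^sub>R (w j - w i))" for i
  define D where "D = (\<Sum>i<N. \<Sum>j<N. inner (v i t - v j t) (a i - a j))"
  have "(Vfun N v has_real_derivative D) (at t)"
    unfolding D_def using ode_v \<open>t > 0\<close>
    by (intro Vfun_has_real_derivative) (simp add: a_def w_def)
  moreover have "D \<le> 2 * lam * (Vfun N v t + Vfun N v (t - \<tau>))"
  proof -
    have "real N * (norm (a i))\<^sup>2 \<le> lam\<^sup>2 * (\<Sum>k<N. (norm (w k - w i))\<^sup>2)" for i
      unfolding a_def using psi_pos psi_le1
      by (intro norm_scaled_mean_squared_le[where A = "{..<N}", unfolded card_lessThan])
        (simp add: abs_le_iff less_imp_le)
    then have "D \<le> lam * ((\<Sum>i<N. \<Sum>j<N. (norm (v i t - v j t))\<^sup>2) + (\<Sum>i<N. \<Sum>j<N. (norm (w i - w j))\<^sup>2))"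
      unfolding D_def
      using sum_inner_diff_le_sum_norm_diff_squared[OF lam_pos, where A = "{..<N}" and u = "\<lambda>i. v i t"]
      by simp
    also have "\<dots> = 2 * lam * (Vfun N v t + Vfun N v (t - \<tau>))"
      by (simp add: Vfun_def w_def algebra_simps)
    finally show ?thesis .
  qed
  ultimately show "\<exists>D. (Vfun N v has_real_derivative D) (at t) \<and>
                   D \<le> 2 * lam * (Vfun N v t + Vfun N v (t - \<tau>))"
    by blast
qed

end
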